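(* Let $\lambda_v\ge0$, $r_v>0$ and $\rho_v=\lambda_v/r_v$ for $v\in V$. There exists a rate allocation scheme $\gamma$ for which the Markov process $N(t)$ is positive recurrent if and only if $\sum_{v'\in\bar{\mathcal A}(v)}\rho_{v'}<1$ for all $v\in V$.
   Context: $G=(V,E)$ is a finite directed rooted tree with vertex set $V=\{1,\dots,|V|\}$ and root $1$, edges oriented from parent to child. For $v\in V$: $\mathcal A(v)$ is the set of strict ancestors of $v$, $\bar{\mathcal A}(v)=\mathcal A(v)\cup\{v\}$. $\mathcal Z=\{z\in\{0,1\}^{V}: z_v z_{v'}=0 \text{ for all } v\in V,\ v'\in\mathcal A(v)\}$ and $\mathrm{conv}(\mathcal Z)$ is its convex hull. A rate allocation scheme is a map $\gamma:\mathbb N^{V}\to\mathrm{conv}(\mathcal Z)$. Given it, $N(t)\in\mathbb N^{V}$ is the continuous-time Markov chain (elastic traffic: flows arrive to beam $v$ as a Poisson process of rate $\lambda_v$, have exponential sizes of mean $1$, and beam $v$ serves at rate $r_v$ when active) with transition rates $n\to n+e^v$ at rate $\lambda_v$ and $n\to n-e^v$ at rate $r_v\gamma_v(n)\mathbf 1\{n_v\ge1\}$, where $e^v$ is the $v$-th canonical basis vector. *)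

theory Defs
  imports "HOL-Analysis.Analysis"
begin

(* Vertex set V = {1..nV}; edges E (parent, child); root 1. *)
definition rooted_tree :: "nat \<Rightarrow> (nat \<times> nat) set \<Rightarrow> bool" where
  "rooted_tree nV E \<longleftrightarrow> nV \<ge> 1 \<and> E \<subseteq> {1..nV} \<times> {1..nV}
     \<and> (\<forall>u. (u, 1) \<notin> E)
     \<and> (\<forall>v\<in>{1..nV}. v \<noteq> 1 \<longrightarrow> (\<exists>!u. (u, v) \<in> E))
     \<and> (\<forall>v\<in>{1..nV}. (1, v) \<in> E\<^sup>*)"

definition anc :: "(nat \<times> nat) set \<Rightarrow> nat \<Rightarrow> nat set" where
  "anc E v = {u. (u, v) \<in> E\<^sup>+}"

definition anc_bar :: "(nat \<times> nat) set \<Rightarrow> nat \<Rightarrow> nat set" where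
  "anc_bar E v = anc E v \<union> {v}"

definition Zset :: "nat \<Rightarrow> (nat \<times> nat) set \<Rightarrow> (nat \<Rightarrow> real) set" where
  "Zset nV E = {z. (\<forall>v. z v \<in> {0, 1}) \<and> (\<forall>v. v \<notin> {1..nV} \<longrightarrow> z v = 0)
      \<and> (\<forall>v\<in>{1..nV}. \<forall>v'\<in>anc E v. z v * z v' = 0)}"

definition convZ :: "nat \<Rightarrow> (nat \<times> nat) set \<Rightarrow> (nat \<Rightarrow> real) set" where
  "convZ nV E = {g. \<exists>c :: (nat \<Rightarrow> real) \<Rightarrow> real.
      (\<forall>z\<in>Zset nV E. c z \<ge> 0) \<and> (\<Sum>z\<in>Zset nV E. c z) = 1
      \<and> (\<forall>v\<in>{1..nV}. g v = (\<Sum>z\<in>Zset nV E. c z * z v))}"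

definition states :: "nat \<Rightarrow> (nat \<Rightarrow> nat) set" where
  "states nV = {n. \<forall>v. v \<notin> {1..nV} \<longrightarrow> n v = 0}"

definition rate_alloc :: "nat \<Rightarrow> (nat \<times> nat) set \<Rightarrow> ((nat \<Rightarrow> nat) \<Rightarrow> nat \<Rightarrow> real) \<Rightarrow> bool" where
  "rate_alloc nV E \<gamma> \<longleftrightarrow> (\<forall>n\<in>states nV. \<gamma> n \<in> convZ nV E)"

definition up :: "(nat \<Rightarrow> nat) \<Rightarrow> nat \<Rightarrow> (nat \<Rightarrow> nat)" where
  "up n v = n(v := n v + 1)"

definition down :: "(nat \<Rightarrow> nat) \<Rightarrow> nat \<Rightarrow> (nat \<Rightarrow> nat)" where
  "down n v = n(v := n v - 1)"

definition srate :: "(nat \<Rightarrow> real) \<Rightarrow> ((nat \<Rightarrow> nat) \<Rightarrow> nat \<Rightarrow> real) \<Rightarrow> (nat \<Rightarrow> nat) \<Rightarrow> nat \<Rightarrow> real" where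
  "srate r \<gamma> n v = (if n v \<ge> 1 then r v * \<gamma> n v else 0)"

definition qtot :: "nat \<Rightarrow> (nat \<Rightarrow> real) \<Rightarrow> (nat \<Rightarrow> real) \<Rightarrow> ((nat \<Rightarrow> nat) \<Rightarrow> nat \<Rightarrow> real) \<Rightarrow> (nat \<Rightarrow> nat) \<Rightarrow> real" where
  "qtot nV lam r \<gamma> n = (\<Sum>v\<in>{1..nV}. lam v + srate r \<gamma> n v)"

(* Expectation over one step of the jump chain from n, with the target state i
   "tabooed" (f is replaced by 0 at i):  sum_y p(n,y) 1{y \<noteq> i} f(y). *)
definition jstep :: "nat \<Rightarrow> (nat \<Rightarrow> real) \<Rightarrow> (nat \<Rightarrow> real) \<Rightarrow> ((nat \<Rightarrow> nat) \<Rightarrow> nat \<Rightarrow> real)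
     \<Rightarrow> (nat \<Rightarrow> nat) \<Rightarrow> ((nat \<Rightarrow> nat) \<Rightarrow> real) \<Rightarrow> (nat \<Rightarrow> nat) \<Rightarrow> real" where
  "jstep nV lam r \<gamma> i f n = (\<Sum>v\<in>{1..nV}.
      lam v / qtot nV lam r \<gamma> n * (if up n v = i then 0 else f (up n v))
    + srate r \<gamma> n v / qtot nV lam r \<gamma> n * (if down n v = i then 0 else f (down n v)))"

(* probability that the jump chain started at n first hits i at jump k+1 *)
fun first_hit :: "nat \<Rightarrow> (nat \<Rightarrow> real) \<Rightarrow> (nat \<Rightarrow> real) \<Rightarrow> ((nat \<Rightarrow> nat) \<Rightarrow> nat \<Rightarrow> real)
     \<Rightarrow> (nat \<Rightarrow> nat) \<Rightarrow> nat \<Rightarrow> (nat \<Rightarrow> nat) \<Rightarrow> real" where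
  "first_hit nV lam r \<gamma> i 0 n = (\<Sum>v\<in>{1..nV}.
      lam v / qtot nV lam r \<gamma> n * (if up n v = i then 1 else 0)
    + srate r \<gamma> n v / qtot nV lam r \<gamma> n * (if down n v = i then 1 else 0))"
| "first_hit nV lam r \<gamma> i (Suc k) n = jstep nV lam r \<gamma> i (first_hit nV lam r \<gamma> i k) n"

(* E_n[ 1{Y_1,...,Y_k \<noteq> i} / q(Y_k) ]  for the jump chain Y started at n;
   summing over k gives the expected time until the return to i. *)
fun hold_term :: "nat \<Rightarrow> (nat \<Rightarrow> real) \<Rightarrow> (nat \<Rightarrow> real) \<Rightarrow> ((nat \<Rightarrow> nat) \<Rightarrow> nat \<Rightarrow> real)
     \<Rightarrow> (nat \<Rightarrow> nat) \<Rightarrow> nat \<Rightarrow> (nat \<Rightarrow> nat) \<Rightarrow> real" where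
  "hold_term nV lam r \<gamma> i 0 n = 1 / qtot nV lam r \<gamma> n"
| "hold_term nV lam r \<gamma> i (Suc k) n = jstep nV lam r \<gamma> i (hold_term nV lam r \<gamma> i k) n"

definition recurrent_state where
  "recurrent_state nV lam r \<gamma> i \<longleftrightarrow> qtot nV lam r \<gamma> i = 0
     \<or> (\<lambda>k. first_hit nV lam r \<gamma> i k i) sums 1"

(* Norris: a recurrent state is positive recurrent if q_i = 0 or m_i = E_i[T_i] < \<infinity> *)
definition pos_recurrent_state where
  "pos_recurrent_state nV lam r \<gamma> i \<longleftrightarrow> recurrent_state nV lam r \<gamma> i
     \<and> (qtot nV lam r \<gamma> i = 0 \<or> summable (\<lambda>k. hold_term nV lam r \<gamma> i k i))"

(* N(t), started empty, is positive recurrent: the empty state is positive recurrent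
   (equivalently, the communicating class of the chain started at 0 is positive recurrent) *)
definition pos_recurrent_chain where
  "pos_recurrent_chain nV lam r \<gamma> \<longleftrightarrow> pos_recurrent_state nV lam r \<gamma> (\<lambda>_. 0)"

end

theory Submission
  imports Defs
begin

text \<open>Necessity: on a root-to-leaf path at most one beam is active, so the beams of a closed ancestor
  set anc_bar E v jointly complete work at rate at most one. If their load is at least one, their
  workload W = \<Sum>u. n u / r u is a submartingale of the jump chain, has mean at least 1 / \<Lambda> after
  the first jump out of the empty state, and grows by at most a constant per jump. Hence the chain
  survives k jumps without returning with probability of order 1 / k, and the expected return time
  diverges like the harmonic series.

  Sufficiency: give preemptive priority to the topmost occupied beams. Every closed ancestor set
  holding work then completes work at rate one, so \<Phi> = \<Sum>v. W (anc_bar E v)^2 has drift at most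
  B - 2 \<eta> \<Sum>v. W (anc_bar E v), negative once there are many flows. From boundedly many flows the
  chain empties within boundedly many jumps with positive probability, and Foster's criterion yields a
  finite expected return time to the empty state.\<close>

section \<open>Ancestors in a rooted tree\<close>

lemma rooted_tree_parent_unique:
  assumes rt: "rooted_tree nV E" and x: "(x, v) \<in> E" and y: "(y, v) \<in> E"
  shows "x = y"
proof -
  have "v \<in> {1..nV}" "v \<noteq> 1" using rt x unfolding rooted_tree_def by blast+
  then show "x = y" using rt x y unfolding rooted_tree_def by blast
qed

lemma rooted_tree_trancl_vertices:
  assumes rt: "rooted_tree nV E" and uv: "(u, v) \<in> E\<^sup>+"
  shows "u \<in> {1..nV}" "v \<in> {1..nV}"
proof -
  have E: "E \<subseteq> {1..nV} \<times> {1..nV}" using rt unfolding rooted_tree_def by blast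
  obtain x where "(u, x) \<in> E" using tranclD[OF uv] by blast
  then show "u \<in> {1..nV}" using E by blast
  obtain y where "(y, v) \<in> E" using tranclD2[OF uv] by blast
  then show "v \<in> {1..nV}" using E by blast
qed

lemma rooted_tree_acyclic:
  assumes rt: "rooted_tree nV E" shows "(v, v) \<notin> E\<^sup>+"
proof
  assume vv: "(v, v) \<in> E\<^sup>+"
  have "(1, v) \<in> E\<^sup>*"
    using rt rooted_tree_trancl_vertices[OF rt vv] unfolding rooted_tree_def by blast
  then show False using vv
  proof (induction rule: rtrancl_induct)
    case base
    then obtain x where "(x, 1) \<in> E" by (metis tranclD2)
    then show False using rt unfolding rooted_tree_def by blast
  next
    case (step y z)
    obtain x where xz: "(x, z) \<in> E" and zx: "(z, x) \<in> E\<^sup>*"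
      using tranclD2[OF step.prems] by blast
    have "x = y" using rooted_tree_parent_unique[OF rt xz step.hyps(2)] .
    then have "(y, y) \<in> E\<^sup>+" using step.hyps(2) zx by (meson rtrancl_into_trancl2)
    then show False using step.IH by blast
  qed
qed

lemma rooted_tree_common_descendant:
  assumes rt: "rooted_tree nV E" and av: "(a, v) \<in> E\<^sup>+" and bv: "(b, v) \<in> E\<^sup>+"
  shows "a = b \<or> (a, b) \<in> E\<^sup>+ \<or> (b, a) \<in> E\<^sup>+"
  using av bv
proof (induction arbitrary: b rule: trancl_induct)
  case (base y)
  obtain c where cy: "(c, y) \<in> E" and bc: "(b, c) \<in> E\<^sup>*" using tranclD2[OF base.prems] by blast
  have "c = a" using rooted_tree_parent_unique[OF rt cy base.hyps] .
  then show ?case using bc by (metis rtranclD)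
next
  case (step y z)
  obtain c where cz: "(c, z) \<in> E" and bc: "(b, c) \<in> E\<^sup>*" using tranclD2[OF step.prems] by blast
  have "c = y" using rooted_tree_parent_unique[OF rt cz step.hyps(2)] .
  show ?case
  proof (cases "b = y")
    case True then show ?thesis using step.hyps(1) by blast
  next
    case False
    then have "(b, y) \<in> E\<^sup>+" using bc \<open>c = y\<close> by (metis rtranclD)
    then show ?thesis using step.IH by blast
  qed
qed

lemma anc_subset: "rooted_tree nV E \<Longrightarrow> anc E v \<subseteq> {1..nV}"
  unfolding anc_def by (auto dest: rooted_tree_trancl_vertices)

lemma anc_bar_subset: "rooted_tree nV E \<Longrightarrow> v \<in> {1..nV} \<Longrightarrow> anc_bar E v \<subseteq> {1..nV}"
  using anc_subset unfolding anc_bar_def by blast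

lemma finite_anc_bar: "rooted_tree nV E \<Longrightarrow> v \<in> {1..nV} \<Longrightarrow> finite (anc_bar E v)"
  by (meson anc_bar_subset finite_atLeastAtMost finite_subset)

lemma anc_bar_comparable:
  assumes "rooted_tree nV E" "a \<in> anc_bar E v" "b \<in> anc_bar E v" "a \<noteq> b"
  shows "a \<in> anc E b \<or> b \<in> anc E a"
  using assms(2-4) rooted_tree_common_descendant[OF assms(1), of a v b]
  unfolding anc_bar_def anc_def by auto

lemma anc_anc_bar_trans: "a \<in> anc E w \<Longrightarrow> w \<in> anc_bar E v \<Longrightarrow> a \<in> anc E v"
  unfolding anc_bar_def anc_def by auto

lemma ex_topmost_in_anc_bar:
  assumes rt: "rooted_tree nV E" and u: "u \<in> anc_bar E v" and nu: "n u \<ge> (1::nat)"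
  shows "\<exists>w\<in>anc_bar E v. n w \<ge> 1 \<and> (\<forall>a\<in>anc E w. n a = 0)"
proof -
  let ?P = "\<lambda>w. w \<in> anc_bar E v \<and> n w \<ge> 1"
  obtain w where Pw: "?P w" and least: "\<And>y. ?P y \<Longrightarrow> card (anc E w) \<le> card (anc E y)"
    using ex_has_least_nat[of ?P u "\<lambda>w. card (anc E w)"] u nu by blast
  have "n a = 0" if a: "a \<in> anc E w" for a
  proof (rule ccontr)
    assume "n a \<noteq> 0"
    then have Pa: "?P a" using anc_anc_bar_trans[OF a] Pw unfolding anc_bar_def by auto
    have "a \<notin> anc E a" using rooted_tree_acyclic[OF rt] unfolding anc_def by blast
    moreover have "anc E a \<subseteq> anc E w" using a unfolding anc_def by auto
    ultimately have "anc E a \<subset> anc E w" using a by blast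
    moreover have "finite (anc E w)" using anc_subset[OF rt] finite_subset by blast
    ultimately have "card (anc E a) < card (anc E w)" by (rule psubset_card_mono[rotated])
    then show False using least[OF Pa] by simp
  qed
  then show ?thesis using Pw by blast
qed

section \<open>Activation sets\<close>

lemma Zset_sum_anc_bar_le_1:
  assumes rt: "rooted_tree nV E" and v: "v \<in> {1..nV}" and z: "z \<in> Zset nV E"
  shows "(\<Sum>u\<in>anc_bar E v. z u) \<le> 1"
proof -
  let ?P = "anc_bar E v"
  have fin: "finite ?P" using finite_anc_bar[OF rt v] .
  have active_unique: "x = y" if "x \<in> ?P" "y \<in> ?P" "z x = 1" "z y = 1" for x y
  proof (rule ccontr)
    assume "x \<noteq> y"
    then have "x \<in> anc E y \<or> y \<in> anc E x" using anc_bar_comparable[OF rt] that by blast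
    moreover have "x \<in> {1..nV}" "y \<in> {1..nV}" using that anc_bar_subset[OF rt v] by auto
    moreover have "\<forall>v\<in>{1..nV}. \<forall>v'\<in>anc E v. z v * z v' = 0" using z by (simp add: Zset_def)
    ultimately show False using that by fastforce
  qed
  have "(\<Sum>u\<in>?P. z u) = (\<Sum>u\<in>?P. if z u = 1 then 1 else 0)"
    using z unfolding Zset_def by (intro sum.cong) auto
  also have "\<dots> = real (card {u\<in>?P. z u = 1})"
    using fin by (simp add: sum.If_cases Int_def conj_commute)
  also have "\<dots> \<le> 1"
    using active_unique fin by (simp add: card_le_Suc0_iff_eq)
  finally show ?thesis .
qed

lemma convZ_bounds:
  assumes rt: "rooted_tree nV E" and gc: "\<gamma> \<in> convZ nV E" and v: "v \<in> {1..nV}"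
  shows "0 \<le> \<gamma> v" "\<gamma> v \<le> 1" "(\<Sum>u\<in>anc_bar E v. \<gamma> u) \<le> 1"
proof -
  obtain c where c0: "\<And>z. z \<in> Zset nV E \<Longrightarrow> c z \<ge> 0" and c1: "(\<Sum>z\<in>Zset nV E. c z) = 1"
    and \<gamma>: "\<And>v. v \<in> {1..nV} \<Longrightarrow> \<gamma> v = (\<Sum>z\<in>Zset nV E. c z * z v)"
    using gc unfolding convZ_def by blast
  have z01: "0 \<le> z v \<and> z v \<le> 1" if "z \<in> Zset nV E" for z v
  proof -
    have "z v \<in> {0, 1}" using that unfolding Zset_def by blast
    then show ?thesis by auto
  qed
  show "0 \<le> \<gamma> v" unfolding \<gamma>[OF v] using c0 z01 by (intro sum_nonneg) auto
  have "(\<Sum>z\<in>Zset nV E. c z * z v) \<le> (\<Sum>z\<in>Zset nV E. c z)"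
    using c0 z01 by (intro sum_mono) (simp add: mult_left_le)
  then show "\<gamma> v \<le> 1" using \<gamma>[OF v] c1 by simp
  have "(\<Sum>u\<in>anc_bar E v. \<gamma> u) = (\<Sum>u\<in>anc_bar E v. \<Sum>z\<in>Zset nV E. c z * z u)"
    using anc_bar_subset[OF rt v] \<gamma> by (intro sum.cong) auto
  also have "\<dots> = (\<Sum>z\<in>Zset nV E. c z * (\<Sum>u\<in>anc_bar E v. z u))"
    by (simp add: sum.swap[of _ "anc_bar E v"] sum_distrib_left)
  also have "\<dots> \<le> (\<Sum>z\<in>Zset nV E. c z)"
    using c0 Zset_sum_anc_bar_le_1[OF rt v] by (intro sum_mono) (simp add: mult_left_le)
  finally show "(\<Sum>u\<in>anc_bar E v. \<gamma> u) \<le> 1" using c1 by simp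
qed

lemma finite_Zset: "finite (Zset nV E)"
proof (rule finite_subset)
  show "Zset nV E \<subseteq> (\<lambda>A v. if v \<in> A then 1 else 0) ` Pow {1..nV}"
  proof
    fix z assume z: "z \<in> Zset nV E"
    have "z v = (if v \<in> {v\<in>{1..nV}. z v = 1} then 1 else 0)" for v
      using z unfolding Zset_def by (cases "v \<in> {1..nV}") auto
    then have "z = (\<lambda>v. if v \<in> {v\<in>{1..nV}. z v = 1} then 1 else 0)" by blast
    then show "z \<in> (\<lambda>A v. if v \<in> A then 1 else 0) ` Pow {1..nV}" by blast
  qed
qed simp

lemma Zset_subset_convZ: "Zset nV E \<subseteq> convZ nV E"
proof
  fix z assume z: "z \<in> Zset nV E"
  let ?c = "\<lambda>w. if w = z then 1 else 0 :: real"
  have "(\<Sum>w\<in>Zset nV E. ?c w * w v) = (\<Sum>w\<in>Zset nV E. if w = z then w v else 0)" for v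
    by (rule sum.cong) simp_all
  then have "(\<Sum>w\<in>Zset nV E. ?c w * w v) = z v" for v
    using z finite_Zset[of nV E] by (simp add: sum.delta')
  moreover have "(\<Sum>w\<in>Zset nV E. ?c w) = 1" using z finite_Zset by (simp add: sum.delta')
  ultimately show "z \<in> convZ nV E" unfolding convZ_def by (intro CollectI exI[of _ ?c]) auto
qed

definition priority :: "(nat \<times> nat) set \<Rightarrow> nat \<Rightarrow> (nat \<Rightarrow> nat) \<Rightarrow> nat \<Rightarrow> real" where
  "priority E nV n v = (if v \<in> {1..nV} \<and> 1 \<le> n v \<and> (\<forall>a\<in>anc E v. n a = 0) then 1 else 0)"

lemma priority_in_Zset: "priority E nV n \<in> Zset nV E"
  unfolding Zset_def
proof (intro CollectI conjI allI ballI impI)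
  fix v show "priority E nV n v \<in> {0, 1}" by (simp add: priority_def)
  show "v \<notin> {1..nV} \<Longrightarrow> priority E nV n v = 0" unfolding priority_def by (rule if_not_P) blast
next
  fix v v' assume "v' \<in> anc E v"
  then show "priority E nV n v * priority E nV n v' = 0"
    by (cases "priority E nV n v = 0") (auto simp: priority_def split: if_splits)
qed

lemma rate_alloc_priority: "rate_alloc nV E (priority E nV)"
  unfolding rate_alloc_def using priority_in_Zset Zset_subset_convZ by blast

section \<open>The jump chain killed at the empty state\<close>

abbreviation empty_state :: "nat \<Rightarrow> nat" where
  "empty_state \<equiv> \<lambda>_. 0"

definition alive :: "(nat \<Rightarrow> nat) \<Rightarrow> real" where
  "alive n = (if n = empty_state then 0 else 1)"

lemma alive_bounds: "0 \<le> alive n" "alive n \<le> 1"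
  by (auto simp: alive_def)

lemma empty_state_in_states: "empty_state \<in> states nV"
  by (simp add: states_def)

lemma up_in_states: "n \<in> states nV \<Longrightarrow> v \<in> {1..nV} \<Longrightarrow> up n v \<in> states nV"
  by (auto simp: states_def up_def)

lemma down_in_states: "n \<in> states nV \<Longrightarrow> v \<in> {1..nV} \<Longrightarrow> down n v \<in> states nV"
  by (auto simp: states_def down_def)

locale elastic_chain =
  fixes nV :: nat and lam r :: "nat \<Rightarrow> real" and g :: "(nat \<Rightarrow> nat) \<Rightarrow> nat \<Rightarrow> real"
  assumes lam_nonneg: "\<And>v. v \<in> {1..nV} \<Longrightarrow> lam v \<ge> 0"
    and r_pos: "\<And>v. v \<in> {1..nV} \<Longrightarrow> r v > 0"
    and g_nonneg: "\<And>n v. n \<in> states nV \<Longrightarrow> v \<in> {1..nV} \<Longrightarrow> g n v \<ge> 0"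
    and g_le_1: "\<And>n v. n \<in> states nV \<Longrightarrow> v \<in> {1..nV} \<Longrightarrow> g n v \<le> 1"
    and arrivals_pos: "(\<Sum>v\<in>{1..nV}. lam v) > 0"
    \<comment> \<open>without arrivals the empty state is absorbing and needs no return-time analysis\<close>
begin

abbreviation q where "q \<equiv> qtot nV lam r g"
abbreviation sr where "sr \<equiv> srate r g"
abbreviation J where "J \<equiv> jstep nV lam r g empty_state"

definition Lam where "Lam = (\<Sum>v\<in>{1..nV}. lam v)"
definition qmax where "qmax = Lam + (\<Sum>v\<in>{1..nV}. r v)"

lemma srate_nonneg: "n \<in> states nV \<Longrightarrow> v \<in> {1..nV} \<Longrightarrow> sr n v \<ge> 0"
  using g_nonneg r_pos by (auto simp: srate_def less_imp_le)

lemma srate_le: "n \<in> states nV \<Longrightarrow> v \<in> {1..nV} \<Longrightarrow> sr n v \<le> r v"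
  using g_le_1 g_nonneg r_pos by (auto simp: srate_def mult_le_cancel_left1 less_imp_le)

lemma Lam_pos: "Lam > 0"
  using arrivals_pos by (simp add: Lam_def)

lemma Lam_le_q: "n \<in> states nV \<Longrightarrow> Lam \<le> q n"
  unfolding qtot_def Lam_def by (rule sum_mono) (use srate_nonneg in auto)

lemma q_pos: "n \<in> states nV \<Longrightarrow> q n > 0"
  using Lam_le_q Lam_pos by fastforce

lemma q_le_qmax: "n \<in> states nV \<Longrightarrow> q n \<le> qmax"
  unfolding qtot_def qmax_def Lam_def sum.distrib[symmetric] by (rule sum_mono) (use srate_le in auto)

lemma qmax_pos: "qmax > 0"
  using q_le_qmax q_pos empty_state_in_states by fastforce

lemma q_empty_state: "q empty_state = Lam"
  by (simp add: qtot_def srate_def Lam_def)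

lemma jump_probabilities_sum:
  "n \<in> states nV \<Longrightarrow> (\<Sum>v\<in>{1..nV}. lam v / q n + sr n v / q n) = 1"
  using q_pos[of n] by (simp add: add_divide_distrib[symmetric] sum_divide_distrib[symmetric] qtot_def)

lemma J_alive: "J f n = (\<Sum>v\<in>{1..nV}.
    lam v / q n * alive (up n v) * f (up n v) + sr n v / q n * alive (down n v) * f (down n v))"
  unfolding jstep_def alive_def by (rule sum.cong) auto

lemma J_vanishing_at_empty:
  "f empty_state = 0 \<Longrightarrow> J f n = (\<Sum>v\<in>{1..nV}. lam v * f (up n v) + sr n v * f (down n v)) / q n"
  unfolding J_alive sum_divide_distrib by (rule sum.cong) (auto simp: alive_def add_divide_distrib)

lemma J_add: "J (\<lambda>y. f y + h y) n = J f n + J h n"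
  unfolding J_alive sum.distrib[symmetric] by (rule sum.cong) (simp_all add: add_divide_distrib algebra_simps)

lemma J_cmult: "J (\<lambda>y. c * f y) n = c * J f n"
  unfolding J_alive by (simp add: sum_distrib_left algebra_simps)

lemma J_sum: "J (\<lambda>y. \<Sum>j\<in>A. f j y) n = (\<Sum>j\<in>A. J (f j) n)"
  unfolding J_alive by (simp add: sum.swap[of _ A] sum_distrib_left sum.distrib)

lemma J_mono_neighbours:
  assumes n: "n \<in> states nV"
    and le: "\<And>u. u \<in> {1..nV} \<Longrightarrow> f (up n u) \<le> h (up n u) \<and> f (down n u) \<le> h (down n u)"
  shows "J f n \<le> J h n"
  unfolding J_alive
proof (rule sum_mono)
  fix u assume u: "u \<in> {1..nV}"
  have "lam u / q n * alive (up n u) \<ge> 0" "sr n u / q n * alive (down n u) \<ge> 0"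
    using lam_nonneg[OF u] srate_nonneg[OF n u] q_pos[OF n] alive_bounds by auto
  then show "lam u / q n * alive (up n u) * f (up n u) + sr n u / q n * alive (down n u) * f (down n u)
      \<le> lam u / q n * alive (up n u) * h (up n u) + sr n u / q n * alive (down n u) * h (down n u)"
    using le[OF u] by (intro add_mono mult_left_mono) auto
qed

lemma J_mono: "n \<in> states nV \<Longrightarrow> (\<And>y. y \<in> states nV \<Longrightarrow> f y \<le> h y) \<Longrightarrow> J f n \<le> J h n"
  using up_in_states down_in_states by (intro J_mono_neighbours) auto

lemma J_one_le: "n \<in> states nV \<Longrightarrow> J (\<lambda>_. 1) n \<le> 1"
proof -
  assume n: "n \<in> states nV"
  have "J (\<lambda>_. 1) n \<le> (\<Sum>v\<in>{1..nV}. lam v / q n + sr n v / q n)"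
    unfolding J_alive mult_1_right
    by (intro sum_mono add_mono mult_left_le alive_bounds)
      (simp_all add: lam_nonneg srate_nonneg[OF n] q_pos[OF n] less_imp_le)
  then show ?thesis using jump_probabilities_sum[OF n] by simp
qed

lemma J_zero: "J (\<lambda>_. 0) n = 0"
  using J_cmult[of 0 "\<lambda>_. 0" n] by simp

lemma Jpow_add: "(J ^^ k) (\<lambda>y. f y + h y) = (\<lambda>y. (J ^^ k) f y + (J ^^ k) h y)"
  by (induction k) (auto simp: J_add)

lemma Jpow_cmult: "(J ^^ k) (\<lambda>y. c * f y) = (\<lambda>y. c * (J ^^ k) f y)"
  by (induction k) (auto simp: J_cmult)

lemma Jpow_diff: "(J ^^ k) (\<lambda>y. f y - h y) = (\<lambda>y. (J ^^ k) f y - (J ^^ k) h y)"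
  using Jpow_add[of k f "\<lambda>y. (-1) * h y"] by (simp only: Jpow_cmult[of k "-1" h]) simp

lemma Jpow_Suc': "(J ^^ Suc k) f = (J ^^ k) (J f)"
  by (simp add: funpow_Suc_right del: funpow.simps)

lemma Jpow_mono:
  "(\<And>y. y \<in> states nV \<Longrightarrow> f y \<le> h y) \<Longrightarrow> n \<in> states nV \<Longrightarrow> (J ^^ k) f n \<le> (J ^^ k) h n"
  by (induction k arbitrary: n) (simp_all add: J_mono)

lemma Jpow_zero: "(J ^^ k) (\<lambda>_. 0) = (\<lambda>_. 0)"
  by (induction k) (auto simp: J_zero)

lemma Jpow_nonneg: "(\<And>y. y \<in> states nV \<Longrightarrow> f y \<ge> 0) \<Longrightarrow> n \<in> states nV \<Longrightarrow> (J ^^ k) f n \<ge> 0"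
  using Jpow_mono[of "\<lambda>_. 0" f n k] Jpow_zero by simp

lemma Jpow_one_le: "n \<in> states nV \<Longrightarrow> (J ^^ k) (\<lambda>_. 1) n \<le> 1"
proof (induction k arbitrary: n)
  case (Suc k)
  have "(J ^^ Suc k) (\<lambda>_. 1) n \<le> J (\<lambda>_. 1) n" using Suc by (simp add: J_mono)
  also have "\<dots> \<le> 1" using J_one_le Suc.prems .
  finally show ?case .
qed simp

lemma Jpow_one_nonneg: "n \<in> states nV \<Longrightarrow> (J ^^ k) (\<lambda>_. 1) n \<ge> 0"
  by (rule Jpow_nonneg) simp_all

lemma hold_term_eq_Jpow: "hold_term nV lam r g empty_state k = (J ^^ k) (\<lambda>n. 1 / q n)"
  by (induction k) auto

lemma first_hit_eq_survival_diff:
  assumes n: "n \<in> states nV"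
  shows "first_hit nV lam r g empty_state k n = (J ^^ k) (\<lambda>_. 1) n - (J ^^ Suc k) (\<lambda>_. 1) n"
proof -
  have first_hit_0: "first_hit nV lam r g empty_state 0 y = 1 - J (\<lambda>_. 1) y" if "y \<in> states nV" for y
  proof -
    have "first_hit nV lam r g empty_state 0 y + J (\<lambda>_. 1) y
        = (\<Sum>v\<in>{1..nV}. lam v / q y + sr y v / q y)"
      unfolding first_hit.simps jstep_def sum.distrib[symmetric]
      by (rule sum.cong) (auto simp: add_divide_distrib[symmetric])
    then show ?thesis using jump_probabilities_sum[OF that] by simp
  qed
  have "first_hit nV lam r g empty_state k = (J ^^ k) (first_hit nV lam r g empty_state 0)"
    by (induction k) auto
  then have "first_hit nV lam r g empty_state k n = (J ^^ k) (\<lambda>y. 1 - J (\<lambda>_. 1) y) n"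
    using Jpow_mono[OF _ n] first_hit_0 by (smt (verit))
  then show ?thesis by (simp only: Jpow_diff Jpow_Suc')
qed

lemma Jpow_one_le_hold_term:
  "n \<in> states nV \<Longrightarrow> (J ^^ k) (\<lambda>_. 1) n \<le> qmax * hold_term nV lam r g empty_state k n"
proof -
  assume n: "n \<in> states nV"
  have "(J ^^ k) (\<lambda>_. 1) n \<le> (J ^^ k) (\<lambda>y. qmax * (1 / q y)) n"
    using q_le_qmax q_pos n by (intro Jpow_mono) (auto simp: field_simps)
  then show ?thesis by (simp only: Jpow_cmult hold_term_eq_Jpow)
qed

section \<open>Criteria for positive recurrence\<close>

lemma pos_recurrent_if_summable_hold_term:
  assumes summable: "summable (\<lambda>k. hold_term nV lam r g empty_state k empty_state)"
  shows "pos_recurrent_chain nV lam r g"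
proof -
  let ?s = "\<lambda>k. (J ^^ k) (\<lambda>_. 1) empty_state"
  have "?s \<longlonglongrightarrow> 0"
  proof (rule tendsto_sandwich[of "\<lambda>_. 0" _ _ "\<lambda>k. qmax * hold_term nV lam r g empty_state k empty_state"])
    show "(\<lambda>k. qmax * hold_term nV lam r g empty_state k empty_state) \<longlonglongrightarrow> 0"
      using tendsto_mult_right_zero[OF summable_LIMSEQ_zero[OF summable]] by simp
  qed (use Jpow_one_nonneg Jpow_one_le_hold_term empty_state_in_states in auto)
  moreover have "(\<Sum>k<K. first_hit nV lam r g empty_state k empty_state) = 1 - ?s K" for K
    using sum_lessThan_telescope'[of ?s K]
    by (simp add: first_hit_eq_survival_diff[OF empty_state_in_states])
  ultimately have "(\<lambda>k. first_hit nV lam r g empty_state k empty_state) sums 1"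
    unfolding sums_def using tendsto_diff[OF tendsto_const[of 1]] by fastforce
  then show ?thesis using summable
    unfolding pos_recurrent_chain_def pos_recurrent_state_def recurrent_state_def by simp
qed

lemma potential_le_superharmonic:
  assumes nonneg: "\<And>y. y \<in> states nV \<Longrightarrow> V y \<ge> 0"
    and super: "\<And>y. y \<in> states nV \<Longrightarrow> V y \<ge> h y + J V y"
    and n: "n \<in> states nV"
  shows "(\<Sum>k<K. (J ^^ k) h n) \<le> V n"
proof -
  have "(\<Sum>k<K. (J ^^ k) h n) + (J ^^ K) V n \<le> V n" if "n \<in> states nV" for n
    using that
  proof (induction K arbitrary: n)
    case (Suc K)
    have "(J ^^ Suc K) V n = (J ^^ K) (J V) n" by (simp only: Jpow_Suc')
    also have "\<dots> \<le> (J ^^ K) (\<lambda>y. V y - h y) n"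
      using super Suc.prems by (intro Jpow_mono) (auto simp: algebra_simps)
    finally have "(J ^^ Suc K) V n \<le> (J ^^ K) V n - (J ^^ K) h n" by (simp add: Jpow_diff)
    then show ?case using Suc.IH[OF Suc.prems] by simp
  qed simp
  then show ?thesis using Jpow_nonneg[OF nonneg n, where k=K] n by force
qed

lemma pos_recurrent_if_superharmonic:
  assumes nonneg: "\<And>y. y \<in> states nV \<Longrightarrow> V y \<ge> 0"
    and super: "\<And>y. y \<in> states nV \<Longrightarrow> V y \<ge> 1 / q y + J V y"
  shows "pos_recurrent_chain nV lam r g"
proof (rule pos_recurrent_if_summable_hold_term, rule summableI_nonneg_bounded)
  show "0 \<le> hold_term nV lam r g empty_state k empty_state" for k
    unfolding hold_term_eq_Jpow using q_pos empty_state_in_states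
    by (intro Jpow_nonneg) (auto simp: less_imp_le)
  show "(\<Sum>k<K. hold_term nV lam r g empty_state k empty_state) \<le> V empty_state" for K
    unfolding hold_term_eq_Jpow
    using potential_le_superharmonic[OF nonneg super empty_state_in_states] by simp
qed

lemma J_expected_survival_steps:
  "J (\<lambda>y. \<Sum>j<m. (J ^^ j) (\<lambda>_. 1) y) n = (\<Sum>j<m. (J ^^ j) (\<lambda>_. 1) n) - 1 + (J ^^ m) (\<lambda>_. 1) n"
proof -
  have "J (\<lambda>y. \<Sum>j<m. (J ^^ j) (\<lambda>_. 1) y) n = (\<Sum>j<m. (J ^^ Suc j) (\<lambda>_. 1) n)"
    by (simp add: J_sum)
  also have "\<dots> = (\<Sum>j<Suc m. (J ^^ j) (\<lambda>_. 1) n) - 1"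
    by (subst sum.lessThan_Suc_shift) simp
  finally show ?thesis by simp
qed

text \<open>Outside F the function \<Phi> drops by \<epsilon> per jump. On F the bonus K \<psi>, where
  \<psi> is the expected number of the first m jumps survived, drops by at least K p, since the chain
  is killed within m jumps with probability at least p.\<close>

lemma pos_recurrent_Foster:
  assumes nonneg: "\<And>y. y \<in> states nV \<Longrightarrow> \<Phi> y \<ge> 0"
    and drift_out: "\<And>y. y \<in> states nV \<Longrightarrow> y \<notin> F \<Longrightarrow> J \<Phi> y \<le> \<Phi> y - \<epsilon>"
    and drift_in: "\<And>y. y \<in> states nV \<Longrightarrow> J \<Phi> y \<le> \<Phi> y + b"
    and \<epsilon>: "\<epsilon> > 0" and b: "b \<ge> 0" and p: "p > 0"
    and dies_from_F: "\<And>y. y \<in> states nV \<Longrightarrow> y \<in> F \<Longrightarrow> (J ^^ m) (\<lambda>_. 1) y \<le> 1 - p"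
  shows "pos_recurrent_chain nV lam r g"
proof -
  define \<psi> where "\<psi> y = (\<Sum>j<m. (J ^^ j) (\<lambda>_. 1) y)" for y
  define K where "K = (b + \<epsilon>) / p"
  define U where "U y = \<Phi> y + K * \<psi> y" for y
  have K: "K \<ge> 0" "K * p = b + \<epsilon>" using b \<epsilon> p by (simp_all add: K_def)
  have \<psi>_nonneg: "\<psi> y \<ge> 0" if "y \<in> states nV" for y
    unfolding \<psi>_def using Jpow_one_nonneg that by (auto intro!: sum_nonneg)
  have JU: "J U y = J \<Phi> y + K * (\<psi> y - 1 + (J ^^ m) (\<lambda>_. 1) y)" for y
    unfolding U_def \<psi>_def J_add J_cmult J_expected_survival_steps ..
  have drift_U: "J U y \<le> U y - \<epsilon>" if y: "y \<in> states nV" for y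
  proof (cases "y \<in> F")
    case True
    have "J U y \<le> \<Phi> y + b + K * (\<psi> y - p)"
      unfolding JU using drift_in[OF y] dies_from_F[OF y True] K by (intro add_mono mult_left_mono) auto
    then show ?thesis using K by (simp add: U_def algebra_simps)
  next
    case False
    have "J U y \<le> \<Phi> y - \<epsilon> + K * \<psi> y"
      unfolding JU using drift_out[OF y False] Jpow_one_le[OF y, of m] K
      by (intro add_mono mult_left_mono) auto
    then show ?thesis by (simp add: U_def)
  qed
  have \<epsilon>Lam: "\<epsilon> * Lam > 0" using \<epsilon> Lam_pos by simp
  show ?thesis
  proof (rule pos_recurrent_if_superharmonic[of "\<lambda>y. U y / (\<epsilon> * Lam)"])
    fix y assume y: "y \<in> states nV"
    show "U y / (\<epsilon> * Lam) \<ge> 0" unfolding U_def using nonneg[OF y] \<psi>_nonneg[OF y] K \<epsilon>Lam by simp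
    have "J (\<lambda>y. U y / (\<epsilon> * Lam)) y = J U y / (\<epsilon> * Lam)"
      using J_cmult[of "1 / (\<epsilon> * Lam)" U y] by simp
    also have "\<dots> \<le> (U y - \<epsilon>) / (\<epsilon> * Lam)" using drift_U[OF y] \<epsilon>Lam by (simp add: divide_right_mono)
    also have "\<dots> = U y / (\<epsilon> * Lam) - 1 / Lam" using \<epsilon>Lam \<epsilon> Lam_pos by (simp add: field_simps)
    also have "\<dots> \<le> U y / (\<epsilon> * Lam) - 1 / q y" using Lam_le_q[OF y] Lam_pos by (simp add: frac_le)
    finally show "U y / (\<epsilon> * Lam) \<ge> 1 / q y + J (\<lambda>y. U y / (\<epsilon> * Lam)) y" by simp
  qed
qed

end

section \<open>Workload of a set of beams\<close>

definition workload :: "(nat \<Rightarrow> real) \<Rightarrow> nat set \<Rightarrow> (nat \<Rightarrow> nat) \<Rightarrow> real" where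
  "workload r P n = (\<Sum>u\<in>P. real (n u) / r u)"

lemma workload_empty_state [simp]: "workload r P empty_state = 0"
  by (simp add: workload_def)

lemma workload_up:
  assumes "finite P"
  shows "workload r P (up n v) = workload r P n + (if v \<in> P then 1 / r v else 0)"
proof -
  have "workload r P (up n v) = (\<Sum>u\<in>P. real (n u) / r u + (if u = v then 1 / r u else 0))"
    unfolding workload_def up_def by (rule sum.cong) (auto simp: add_divide_distrib)
  then show ?thesis using assms by (simp add: sum.distrib workload_def)
qed

lemma workload_down:
  assumes "finite P" and "n v \<ge> 1"
  shows "workload r P (down n v) = workload r P n - (if v \<in> P then 1 / r v else 0)"
proof -
  have "workload r P (down n v) = (\<Sum>u\<in>P. real (n u) / r u - (if u = v then 1 / r u else 0))"
    unfolding workload_def down_def using assms(2)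
    by (intro sum.cong) (auto simp: of_nat_diff diff_divide_distrib)
  then show ?thesis using assms(1) by (simp add: sum_subtractf workload_def)
qed

lemma srate_workload_down:
  "finite P \<Longrightarrow> srate r g n v * workload r P (down n v)
     = srate r g n v * workload r P n - (if v \<in> P then srate r g n v / r v else 0)"
  by (cases "n v \<ge> 1") (auto simp: workload_down srate_def algebra_simps)

lemma srate_workload_down_sq:
  "finite P \<Longrightarrow> srate r g n v * (workload r P (down n v))\<^sup>2
     = srate r g n v * ((workload r P n)\<^sup>2 - 2 * workload r P n * (if v \<in> P then 1 / r v else 0)
         + (if v \<in> P then 1 / (r v)\<^sup>2 else 0))"
  by (cases "n v \<ge> 1") (auto simp: workload_down srate_def power2_eq_square algebra_simps)

lemma sum_if_mem_subset:
  "finite A \<Longrightarrow> P \<subseteq> A \<Longrightarrow> (\<Sum>v\<in>A. if v \<in> P then f v else 0) = (\<Sum>v\<in>P. f v)"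
  by (simp add: sum.inter_restrict[symmetric] Int_absorb1)

context elastic_chain
begin

abbreviation W where "W \<equiv> workload r"

lemma workload_nonneg: "P \<subseteq> {1..nV} \<Longrightarrow> W P n \<ge> 0"
  unfolding workload_def using r_pos by (intro sum_nonneg) (auto simp: subset_iff less_imp_le)

lemma workload_down_le: "P \<subseteq> {1..nV} \<Longrightarrow> W P (down n v) \<le> W P n"
  unfolding workload_def down_def using r_pos
  by (intro sum_mono divide_right_mono) (auto simp: subset_iff less_imp_le)

lemma q_J_workload:
  assumes P: "P \<subseteq> {1..nV}" and n: "n \<in> states nV"
  shows "q n * J (W P) n = q n * W P n + (\<Sum>v\<in>P. lam v / r v) - (\<Sum>v\<in>P. sr n v / r v)"
proof -
  have f: "finite P" using P finite_subset by blast
  have "q n * J (W P) n = (\<Sum>v\<in>{1..nV}. lam v * W P (up n v) + sr n v * W P (down n v))"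
    using q_pos[OF n] by (simp add: J_vanishing_at_empty)
  also have "\<dots> = (\<Sum>v\<in>{1..nV}. (lam v + sr n v) * W P n
      + ((if v \<in> P then lam v / r v else 0) - (if v \<in> P then sr n v / r v else 0)))"
    by (rule sum.cong) (auto simp: workload_up[OF f] srate_workload_down[OF f] algebra_simps)
  also have "\<dots> = (\<Sum>v\<in>{1..nV}. lam v + sr n v) * W P n
      + ((\<Sum>v\<in>{1..nV}. if v \<in> P then lam v / r v else 0)
        - (\<Sum>v\<in>{1..nV}. if v \<in> P then sr n v / r v else 0))"
    by (simp add: sum.distrib sum_subtractf sum_distrib_right sum_distrib_left algebra_simps)
  also have "\<dots> = q n * W P n + (\<Sum>v\<in>P. lam v / r v) - (\<Sum>v\<in>P. sr n v / r v)"
    unfolding sum_if_mem_subset[OF finite_atLeastAtMost P] qtot_def by simp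
  finally show ?thesis .
qed

lemma q_J_workload_sq:
  assumes P: "P \<subseteq> {1..nV}" and n: "n \<in> states nV"
  shows "q n * J (\<lambda>y. (W P y)\<^sup>2) n = q n * (W P n)\<^sup>2
     + 2 * W P n * ((\<Sum>u\<in>P. lam u / r u) - (\<Sum>u\<in>P. sr n u / r u))
     + (\<Sum>u\<in>P. (lam u + sr n u) / (r u)\<^sup>2)"
proof -
  have f: "finite P" using P finite_subset by blast
  have "q n * J (\<lambda>y. (W P y)\<^sup>2) n
      = (\<Sum>v\<in>{1..nV}. lam v * (W P (up n v))\<^sup>2 + sr n v * (W P (down n v))\<^sup>2)"
    using q_pos[OF n] by (simp add: J_vanishing_at_empty)
  also have "\<dots> = (\<Sum>v\<in>{1..nV}. (lam v + sr n v) * (W P n)\<^sup>2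
       + 2 * W P n * ((if v \<in> P then lam v / r v else 0) - (if v \<in> P then sr n v / r v else 0))
       + (if v \<in> P then (lam v + sr n v) / (r v)\<^sup>2 else 0))"
    by (rule sum.cong, simp, simp only: workload_up[OF f] srate_workload_down_sq[OF f])
      (auto simp: power2_eq_square algebra_simps add_divide_distrib)
  also have "\<dots> = (\<Sum>v\<in>{1..nV}. lam v + sr n v) * (W P n)\<^sup>2
      + 2 * W P n * ((\<Sum>v\<in>{1..nV}. if v \<in> P then lam v / r v else 0)
        - (\<Sum>v\<in>{1..nV}. if v \<in> P then sr n v / r v else 0))
      + (\<Sum>v\<in>{1..nV}. if v \<in> P then (lam v + sr n v) / (r v)\<^sup>2 else 0)"
    by (simp add: sum.distrib sum_subtractf sum_distrib_right sum_distrib_left algebra_simps)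
  also have "\<dots> = q n * (W P n)\<^sup>2 + 2 * W P n * ((\<Sum>u\<in>P. lam u / r u) - (\<Sum>u\<in>P. sr n u / r u))
      + (\<Sum>u\<in>P. (lam u + sr n u) / (r u)\<^sup>2)"
    unfolding sum_if_mem_subset[OF finite_atLeastAtMost P] qtot_def by simp
  finally show ?thesis .
qed

section \<open>Overload makes the expected return time infinite\<close>

lemma workload_le_J_workload:
  assumes P: "P \<subseteq> {1..nV}" and n: "n \<in> states nV"
    and capacity: "(\<Sum>u\<in>P. g n u) \<le> 1" and overload: "(\<Sum>u\<in>P. lam u / r u) \<ge> 1"
  shows "W P n \<le> J (W P) n"
proof -
  have "(\<Sum>v\<in>P. sr n v / r v) \<le> (\<Sum>v\<in>P. g n v)"
    using P r_pos g_nonneg[OF n] by (intro sum_mono) (auto simp: srate_def less_imp_le)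
  then have "q n * W P n \<le> q n * J (W P) n" using q_J_workload[OF P n] capacity overload by linarith
  then show ?thesis using q_pos[OF n] by simp
qed

lemma Jpow_workload_le:
  assumes P: "P \<subseteq> {1..nV}" and n: "n \<in> states nV"
  shows "(J ^^ k) (W P) n \<le> (W P n + (\<Sum>u\<in>P. 1 / r u) * k) * (J ^^ k) (\<lambda>_. 1) n"
  using n
proof (induction k arbitrary: n)
  case (Suc k)
  define c where "c = (\<Sum>u\<in>P. 1 / r u)"
  have c: "1 / r u \<le> c" "0 \<le> c" if "u \<in> P" for u
    unfolding c_def using that P r_pos finite_subset[OF P]
    by (auto intro!: member_le_sum sum_nonneg simp: subset_iff less_imp_le)
  have c0: "c \<ge> 0"
    unfolding c_def using P r_pos by (intro sum_nonneg) (auto simp: subset_iff less_imp_le)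
  let ?s = "(J ^^ k) (\<lambda>_. 1)"
  have "(J ^^ Suc k) (W P) n \<le> J (\<lambda>y. (W P y + c * k) * ?s y) n"
    using Suc by (simp add: J_mono c_def)
  also have "\<dots> \<le> J (\<lambda>y. (W P n + c * Suc k) * ?s y) n"
  proof (rule J_mono_neighbours[OF Suc.prems])
    fix u assume u: "u \<in> {1..nV}"
    have "W P (up n u) \<le> W P n + c"
      using c c0 finite_subset[OF P] by (auto simp: workload_up)
    then have up: "W P (up n u) + c * k \<le> W P n + c * Suc k" by (simp add: algebra_simps)
    have "W P (down n u) \<le> W P n" using workload_down_le[OF P] .
    then have down: "W P (down n u) + c * k \<le> W P n + c * Suc k" using c0 by (simp add: algebra_simps)
    show "(W P (up n u) + c * k) * ?s (up n u) \<le> (W P n + c * Suc k) * ?s (up n u) \<and>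
        (W P (down n u) + c * k) * ?s (down n u) \<le> (W P n + c * Suc k) * ?s (down n u)"
      using mult_right_mono[OF up Jpow_one_nonneg[OF up_in_states[OF Suc.prems u]]]
        mult_right_mono[OF down Jpow_one_nonneg[OF down_in_states[OF Suc.prems u]]] by blast
  qed
  also have "\<dots> = (W P n + c * Suc k) * (J ^^ Suc k) (\<lambda>_. 1) n" by (simp add: J_cmult)
  finally show ?case by (simp add: c_def)
qed simp

text \<open>The workload of an overloaded set is a submartingale, its first jump from the empty state has
  mean at least 1 / Lam, and it grows at most linearly; hence the survival probability, and with it
  the expected holding time, after k jumps is of order at least 1 / k.\<close>

lemma inverse_le_hold_term:
  assumes P: "P \<subseteq> {1..nV}" and capacity: "\<And>n. n \<in> states nV \<Longrightarrow> (\<Sum>u\<in>P. g n u) \<le> 1"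
    and overload: "(\<Sum>u\<in>P. lam u / r u) \<ge> 1"
  defines "C \<equiv> Lam * (\<Sum>u\<in>P. 1 / r u) * qmax"
  shows "C > 0" and "inverse (real (Suc k)) \<le> C * hold_term nV lam r g empty_state (Suc k) empty_state"
proof -
  let ?c = "\<Sum>u\<in>P. 1 / r u"
  obtain u where "u \<in> P" using overload by fastforce
  then have "?c > 0"
    using P r_pos finite_subset[OF P] by (intro sum_pos2[of _ u]) (auto simp: subset_iff less_imp_le)
  then show C: "C > 0" unfolding C_def using Lam_pos qmax_pos by simp
  have "1 / Lam \<le> J (W P) empty_state"
    using q_J_workload[OF P empty_state_in_states] overload Lam_pos
    by (simp add: q_empty_state srate_def field_simps)
  also have "\<dots> \<le> J ((J ^^ k) (W P)) empty_state"
  proof (rule J_mono[OF empty_state_in_states])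
    fix y assume "y \<in> states nV"
    then show "W P y \<le> (J ^^ k) (W P) y"
    proof (induction k)
      case (Suc k)
      have "(J ^^ k) (W P) y \<le> (J ^^ k) (J (W P)) y"
        using workload_le_J_workload[OF P _ capacity overload] Suc.prems by (intro Jpow_mono) auto
      then show ?case using Suc.IH[OF Suc.prems] by (simp only: Jpow_Suc')
    qed simp
  qed
  also have "\<dots> \<le> ?c * Suc k * (J ^^ Suc k) (\<lambda>_. 1) empty_state"
    using Jpow_workload_le[OF P empty_state_in_states, of "Suc k"] by simp
  also have "\<dots> \<le> ?c * Suc k * (qmax * hold_term nV lam r g empty_state (Suc k) empty_state)"
    using mult_left_mono[OF Jpow_one_le_hold_term[OF empty_state_in_states, of "Suc k"], of "?c * Suc k"]
      \<open>?c > 0\<close> by simp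
  finally show "inverse (real (Suc k)) \<le> C * hold_term nV lam r g empty_state (Suc k) empty_state"
    using Lam_pos by (simp add: C_def field_simps)
qed

lemma hold_term_not_summable_if_overloaded:
  assumes P: "P \<subseteq> {1..nV}" and capacity: "\<And>n. n \<in> states nV \<Longrightarrow> (\<Sum>u\<in>P. g n u) \<le> 1"
    and overload: "(\<Sum>u\<in>P. lam u / r u) \<ge> 1"
  shows "\<not> summable (\<lambda>k. hold_term nV lam r g empty_state k empty_state)"
proof
  assume "summable (\<lambda>k. hold_term nV lam r g empty_state k empty_state)"
  then have "summable (\<lambda>k. hold_term nV lam r g empty_state (Suc k) empty_state)"
    using summable_Suc_iff[of "\<lambda>k. hold_term nV lam r g empty_state k empty_state"] by blast
  then have "summable (\<lambda>k. C * hold_term nV lam r g empty_state (Suc k) empty_state)" for C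
    by (rule summable_mult)
  moreover have "norm (inverse (real (Suc k)))
      \<le> Lam * (\<Sum>u\<in>P. 1 / r u) * qmax * hold_term nV lam r g empty_state (Suc k) empty_state" for k
    using inverse_le_hold_term(2)[OF P capacity overload] by simp
  ultimately have "summable (\<lambda>k. inverse (real (Suc k)))"
    by (rule summable_comparison_test'[where N = 0])
  then show False using not_summable_harmonic summable_Suc_iff by blast
qed

end

section \<open>Stability under a load margin\<close>

definition num_flows :: "nat \<Rightarrow> (nat \<Rightarrow> nat) \<Rightarrow> nat" where
  "num_flows nV n = (\<Sum>v\<in>{1..nV}. n v)"

lemma num_flows_down:
  assumes u: "u \<in> {1..nV}" and nu: "n u \<ge> 1"
  shows "num_flows nV (down n u) + 1 = num_flows nV n"
proof -
  have rest: "(\<Sum>v\<in>{1..nV} - {u}. down n u v) = (\<Sum>v\<in>{1..nV} - {u}. n v)"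
    by (rule sum.cong) (auto simp: down_def)
  have "num_flows nV (down n u) = (n u - 1) + (\<Sum>v\<in>{1..nV} - {u}. n v)"
    unfolding num_flows_def using u rest by (simp add: sum.remove down_def)
  moreover have "num_flows nV n = n u + (\<Sum>v\<in>{1..nV} - {u}. n v)" unfolding num_flows_def using u by (simp add: sum.remove)
  ultimately show ?thesis using nu by simp
qed

lemma num_flows_eq_0: "n \<in> states nV \<Longrightarrow> num_flows nV n = 0 \<Longrightarrow> n = empty_state"
  by (auto simp: num_flows_def states_def fun_eq_iff)

lemma num_flows_up_empty_state: "v \<in> {1..nV} \<Longrightarrow> num_flows nV (up empty_state v) = 1"
  unfolding num_flows_def up_def by (simp add: if_distrib[of real] sum.delta)

lemma up_neq_empty_state: "up n v \<noteq> empty_state"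
  by (auto simp: up_def fun_eq_iff)

context elastic_chain
begin

lemma J_le_1_minus_service:
  assumes n: "n \<in> states nV" and u: "u \<in> {1..nV}"
    and f: "\<And>y. y \<in> states nV \<Longrightarrow> 0 \<le> f y \<and> f y \<le> 1" and t: "alive (down n u) * f (down n u) \<le> 1 - t"
  shows "J f n \<le> 1 - sr n u / q n * t"
proof -
  have "J f n \<le> (\<Sum>v\<in>{1..nV}. lam v / q n + sr n v / q n * (if v = u then 1 - t else 1))"
    unfolding J_alive
  proof (rule sum_mono)
    fix v assume v: "v \<in> {1..nV}"
    have "lam v / q n \<ge> 0" "sr n v / q n \<ge> 0"
      using lam_nonneg[OF v] srate_nonneg[OF n v] q_pos[OF n] by auto
    moreover have "alive (up n v) * f (up n v) \<le> 1"
      using alive_bounds f[OF up_in_states[OF n v]] by (simp add: mult_le_one)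
    moreover have "alive (down n v) * f (down n v) \<le> (if v = u then 1 - t else 1)"
      using alive_bounds f[OF down_in_states[OF n v]] t by (simp add: mult_le_one)
    ultimately show "lam v / q n * alive (up n v) * f (up n v) + sr n v / q n * alive (down n v) * f (down n v)
        \<le> lam v / q n + sr n v / q n * (if v = u then 1 - t else 1)"
      by (metis (no_types, lifting) add_mono mult.assoc mult_left_mono mult.right_neutral)
  qed
  also have "\<dots> = (\<Sum>v\<in>{1..nV}. (lam v / q n + sr n v / q n) - (if v = u then sr n v / q n * t else 0))"
    by (rule sum.cong) (auto simp: algebra_simps diff_divide_distrib)
  also have "\<dots> = (\<Sum>v\<in>{1..nV}. lam v / q n + sr n v / q n) - sr n u / q n * t"
    using u by (simp add: sum_subtractf)
  finally show ?thesis using jump_probabilities_sum[OF n] by simp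
qed

text \<open>Each jump completes a service with probability at least \<beta>.\<close>

lemma survival_le_if_served:
  assumes served: "\<And>n. n \<in> states nV \<Longrightarrow> n \<noteq> empty_state \<Longrightarrow> \<exists>u\<in>{1..nV}. n u \<ge> 1 \<and> sr n u \<ge> \<mu>"
    and \<mu>: "\<mu> > 0"
  defines "\<beta> \<equiv> \<mu> / (qmax + \<mu>)"
  shows "n \<in> states nV \<Longrightarrow> n \<noteq> empty_state \<Longrightarrow> num_flows nV n \<le> k \<Longrightarrow> (J ^^ k) (\<lambda>_. 1) n \<le> 1 - \<beta> ^ k"
proof (induction k arbitrary: n)
  case 0 then show ?case using num_flows_eq_0 by auto
next
  case (Suc k)
  have \<beta>: "0 \<le> \<beta>" "\<beta> ^ k \<le> 1" using \<mu> qmax_pos by (auto simp: \<beta>_def power_le_one)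
  obtain u where u: "u \<in> {1..nV}" and nu: "n u \<ge> 1" and su: "sr n u \<ge> \<mu>"
    using served[OF Suc.prems(1,2)] by blast
  let ?f = "(J ^^ k) (\<lambda>_. 1)"
  have t: "alive (down n u) * ?f (down n u) \<le> 1 - \<beta> ^ k"
  proof (cases "down n u = empty_state")
    case False
    have "num_flows nV (down n u) \<le> k" using num_flows_down[of u nV n, OF u nu] Suc.prems(3) by simp
    then show ?thesis using Suc.IH down_in_states[OF Suc.prems(1) u] False by (simp add: alive_def)
  qed (use \<beta> in \<open>simp add: alive_def\<close>)
  have "\<beta> \<le> \<mu> / qmax" using \<mu> qmax_pos by (simp add: \<beta>_def frac_le)
  also have "\<dots> \<le> sr n u / q n"
    using q_le_qmax[OF Suc.prems(1)] q_pos[OF Suc.prems(1)] \<mu> su by (simp add: frac_le)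
  finally have "\<beta> * \<beta> ^ k \<le> sr n u / q n * \<beta> ^ k" using \<beta> by (intro mult_right_mono) auto
  moreover have "(J ^^ Suc k) (\<lambda>_. 1) n \<le> 1 - sr n u / q n * \<beta> ^ k"
    using J_le_1_minus_service[where f = ?f, OF Suc.prems(1) u _ t] Jpow_one_nonneg Jpow_one_le by simp
  ultimately show ?case by simp
qed

lemma J_empty_state_le:
  assumes "c \<ge> 0" and le: "\<And>v. v \<in> {1..nV} \<Longrightarrow> f (up empty_state v) \<le> c"
  shows "J f empty_state \<le> c"
proof -
  have "J f empty_state = (\<Sum>v\<in>{1..nV}. lam v / Lam * (alive (up empty_state v) * f (up empty_state v)))"
    unfolding J_alive q_empty_state by (simp add: srate_def mult.assoc)
  also have "\<dots> \<le> (\<Sum>v\<in>{1..nV}. lam v / Lam * c)"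
  proof (rule sum_mono)
    fix v assume v: "v \<in> {1..nV}"
    have "alive (up empty_state v) * f (up empty_state v) \<le> c"
      using le[OF v] by (simp add: alive_def up_neq_empty_state)
    then show "lam v / Lam * (alive (up empty_state v) * f (up empty_state v)) \<le> lam v / Lam * c"
      using lam_nonneg[OF v] Lam_pos by (intro mult_left_mono) auto
  qed
  also have "\<dots> = c"
    using Lam_pos unfolding sum_distrib_right[symmetric] sum_divide_distrib[symmetric] Lam_def by simp
  finally show ?thesis .
qed

lemma q_drift_sum_workload_sq:
  assumes A: "\<And>v. v \<in> {1..nV} \<Longrightarrow> A v \<subseteq> {1..nV}"
    and served: "\<And>n v. n \<in> states nV \<Longrightarrow> v \<in> {1..nV} \<Longrightarrow> W (A v) n > 0 \<Longrightarrow> 1 \<le> (\<Sum>u\<in>A v. sr n u / r u)"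
    and load: "\<And>v. v \<in> {1..nV} \<Longrightarrow> (\<Sum>u\<in>A v. lam u / r u) \<le> 1 - \<eta>"
    and n: "n \<in> states nV"
  shows "q n * (J (\<lambda>y. \<Sum>v\<in>{1..nV}. (W (A v) y)\<^sup>2) n - (\<Sum>v\<in>{1..nV}. (W (A v) n)\<^sup>2))
    \<le> (\<Sum>v\<in>{1..nV}. \<Sum>u\<in>A v. (lam u + r u) / (r u)\<^sup>2) - 2 * \<eta> * (\<Sum>v\<in>{1..nV}. W (A v) n)"
proof -
  have single: "q n * J (\<lambda>y. (W (A v) y)\<^sup>2) n \<le> q n * (W (A v) n)\<^sup>2 - 2 * \<eta> * W (A v) n
      + (\<Sum>u\<in>A v. (lam u + r u) / (r u)\<^sup>2)" if v: "v \<in> {1..nV}" for v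
  proof -
    have "W (A v) n * ((\<Sum>u\<in>A v. lam u / r u) - (\<Sum>u\<in>A v. sr n u / r u)) \<le> W (A v) n * - \<eta>"
    proof (cases "W (A v) n > 0")
      case True
      then show ?thesis using served[OF n v True] load[OF v] by (intro mult_left_mono) auto
    qed (use workload_nonneg[OF A[OF v], of n] in simp)
    moreover have "(\<Sum>u\<in>A v. (lam u + sr n u) / (r u)\<^sup>2) \<le> (\<Sum>u\<in>A v. (lam u + r u) / (r u)\<^sup>2)"
      using A[OF v] srate_le[OF n] by (intro sum_mono divide_right_mono) (auto simp: subset_iff)
    ultimately show ?thesis using q_J_workload_sq[OF A[OF v] n] by (simp add: algebra_simps)
  qed
  have "q n * J (\<lambda>y. \<Sum>v\<in>{1..nV}. (W (A v) y)\<^sup>2) n = (\<Sum>v\<in>{1..nV}. q n * J (\<lambda>y. (W (A v) y)\<^sup>2) n)"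
    by (simp add: J_sum sum_distrib_left)
  also have "\<dots> \<le> (\<Sum>v\<in>{1..nV}. q n * (W (A v) n)\<^sup>2 - 2 * \<eta> * W (A v) n
      + (\<Sum>u\<in>A v. (lam u + r u) / (r u)\<^sup>2))"
    by (rule sum_mono) (rule single)
  finally show ?thesis by (simp add: sum.distrib sum_subtractf sum_distrib_left algebra_simps)
qed

lemma num_flows_le_sum_workload:
  assumes A: "\<And>v. v \<in> {1..nV} \<Longrightarrow> A v \<subseteq> {1..nV}" and self: "\<And>v. v \<in> {1..nV} \<Longrightarrow> v \<in> A v"
  shows "real (num_flows nV n) / (\<Sum>v\<in>{1..nV}. r v) \<le> (\<Sum>v\<in>{1..nV}. W (A v) n)"
  unfolding num_flows_def of_nat_sum sum_divide_distrib
proof (rule sum_mono)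
  fix v assume v: "v \<in> {1..nV}"
  have "r v \<le> (\<Sum>v\<in>{1..nV}. r v)" using v r_pos by (intro member_le_sum) (auto simp: less_imp_le)
  then have "real (n v) / (\<Sum>v\<in>{1..nV}. r v) \<le> real (n v) / r v"
    using r_pos[OF v] by (intro divide_left_mono) auto
  also have "\<dots> \<le> W (A v) n"
    unfolding workload_def using self[OF v] A[OF v] r_pos finite_subset[OF A[OF v]]
    by (intro member_le_sum[where f = "\<lambda>u. real (n u) / r u"]) (auto simp: subset_iff less_imp_le)
  finally show "real (n v) / (\<Sum>v\<in>{1..nV}. r v) \<le> W (A v) n" .
qed

lemma pos_recurrent_if_underloaded:
  assumes A: "\<And>v. v \<in> {1..nV} \<Longrightarrow> A v \<subseteq> {1..nV}" and self: "\<And>v. v \<in> {1..nV} \<Longrightarrow> v \<in> A v"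
    and served: "\<And>n v. n \<in> states nV \<Longrightarrow> v \<in> {1..nV} \<Longrightarrow> W (A v) n > 0 \<Longrightarrow> 1 \<le> (\<Sum>u\<in>A v. sr n u / r u)"
    and load: "\<And>v. v \<in> {1..nV} \<Longrightarrow> (\<Sum>u\<in>A v. lam u / r u) \<le> 1 - \<eta>" and \<eta>: "\<eta> > 0"
    and served_one: "\<And>n. n \<in> states nV \<Longrightarrow> n \<noteq> empty_state \<Longrightarrow> \<exists>u\<in>{1..nV}. n u \<ge> 1 \<and> sr n u \<ge> \<mu>"
    and \<mu>: "\<mu> > 0"
  shows "pos_recurrent_chain nV lam r g"
proof -
  define \<Phi> where "\<Phi> y = (\<Sum>v\<in>{1..nV}. (W (A v) y)\<^sup>2)" for y
  define B where "B = (\<Sum>v\<in>{1..nV}. \<Sum>u\<in>A v. (lam u + r u) / (r u)\<^sup>2)"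
  define R where "R = (\<Sum>v\<in>{1..nV}. r v)"
  define M where "M = nat \<lceil>(B + 1) * R / (2 * \<eta>)\<rceil>"
  define F where "F = {y. num_flows nV y \<le> Suc M}"
  define \<beta> where "\<beta> = \<mu> / (qmax + \<mu>)"
  have B: "B \<ge> 0"
    unfolding B_def
  proof (intro sum_nonneg)
    fix v u assume "v \<in> {1..nV}" "u \<in> A v"
    then have "u \<in> {1..nV}" using A by blast
    then show "0 \<le> (lam u + r u) / (r u)\<^sup>2" using lam_nonneg r_pos by (simp add: less_imp_le)
  qed
  have "{1..nV} \<noteq> {}" using Lam_pos unfolding Lam_def by (metis less_irrefl sum.empty)
  then have R: "R > 0" unfolding R_def using r_pos by (intro sum_pos) auto
  have \<beta>: "0 < \<beta>" "\<beta> \<le> 1" using \<mu> qmax_pos by (auto simp: \<beta>_def)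
  have drift: "q y * (J \<Phi> y - \<Phi> y) \<le> B - 2 * \<eta> * (\<Sum>v\<in>{1..nV}. W (A v) y)" if "y \<in> states nV" for y
    using q_drift_sum_workload_sq[OF A served load that] unfolding \<Phi>_def B_def .
  have W_nonneg: "0 \<le> 2 * \<eta> * (\<Sum>v\<in>{1..nV}. W (A v) y)" for y
    using \<eta> sum_nonneg[of "{1..nV}" "\<lambda>v. W (A v) y"] workload_nonneg[OF A] by simp
  show ?thesis
  proof (rule pos_recurrent_Foster[where \<Phi> = \<Phi> and F = F and \<epsilon> = "1 / qmax" and b = "B / Lam"
        and p = "\<beta> ^ Suc (Suc M)" and m = "Suc (Suc M)"])
    fix y assume y: "y \<in> states nV"
    show "\<Phi> y \<ge> 0" unfolding \<Phi>_def by (simp add: sum_nonneg)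
    have "J \<Phi> y - \<Phi> y \<le> B / q y"
      using drift[OF y] W_nonneg[of y] q_pos[OF y] by (simp add: field_simps)
    also have "\<dots> \<le> B / Lam" using B Lam_le_q[OF y] Lam_pos by (simp add: frac_le)
    finally show "J \<Phi> y \<le> \<Phi> y + B / Lam" by simp
    show "J \<Phi> y \<le> \<Phi> y - 1 / qmax" if "y \<notin> F"
    proof -
      have "real M \<ge> (B + 1) * R / (2 * \<eta>)" unfolding M_def by linarith
      moreover have "real (num_flows nV y) \<ge> real M + 2" using that by (simp add: F_def)
      ultimately have "real (num_flows nV y) > (B + 1) * R / (2 * \<eta>)" by linarith
      then have "2 * \<eta> * (real (num_flows nV y) / R) > B + 1" using \<eta> R by (simp add: field_simps)
      moreover have "2 * \<eta> * (real (num_flows nV y) / R) \<le> 2 * \<eta> * (\<Sum>v\<in>{1..nV}. W (A v) y)"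
        using num_flows_le_sum_workload[OF A self, of y] \<eta> unfolding R_def by (intro mult_left_mono) auto
      ultimately have "q y * (J \<Phi> y - \<Phi> y) \<le> -1" using drift[OF y] by linarith
      then have "J \<Phi> y - \<Phi> y \<le> -1 / q y" using q_pos[OF y] by (simp add: field_simps)
      also have "\<dots> \<le> -1 / qmax" using q_le_qmax[OF y] q_pos[OF y] by (simp add: frac_le)
      finally show ?thesis by simp
    qed
    show "(J ^^ Suc (Suc M)) (\<lambda>_. 1) y \<le> 1 - \<beta> ^ Suc (Suc M)" if "y \<in> F"
    proof (cases "y = empty_state")
      case False
      then show ?thesis
        using survival_le_if_served[OF served_one \<mu> y False, of "Suc (Suc M)"] that
        unfolding F_def \<beta>_def by simp
    next
      case True
      have "J ((J ^^ Suc M) (\<lambda>_. 1)) empty_state \<le> 1 - \<beta> ^ Suc M"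
      proof (rule J_empty_state_le)
        show "0 \<le> 1 - \<beta> ^ Suc M" using \<beta> power_le_one[of \<beta> "Suc M"] by simp
        fix v assume v: "v \<in> {1..nV}"
        show "(J ^^ Suc M) (\<lambda>_. 1) (up empty_state v) \<le> 1 - \<beta> ^ Suc M"
          using survival_le_if_served[OF served_one \<mu> up_in_states[OF empty_state_in_states v]
              up_neq_empty_state, of "Suc M"] num_flows_up_empty_state[OF v]
          unfolding \<beta>_def by simp
      qed
      also have "\<dots> \<le> 1 - \<beta> ^ Suc (Suc M)" using \<beta> by (simp add: mult_left_le_one_le)
      finally show ?thesis using True by simp
    qed
  qed (use qmax_pos B Lam_pos \<beta> in simp_all)
qed

end

section \<open>The stability region\<close>

lemma elastic_chain_if_rate_alloc:
  assumes rt: "rooted_tree nV E" and "\<forall>v\<in>{1..nV}. lam v \<ge> 0" and "\<forall>v\<in>{1..nV}. r v > 0"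
    and "rate_alloc nV E \<gamma>" and "(\<Sum>v\<in>{1..nV}. lam v) > 0"
  shows "elastic_chain nV lam r \<gamma>"
proof (unfold_locales)
  show "\<And>v. v \<in> {1..nV} \<Longrightarrow> 0 \<le> lam v" "\<And>v. v \<in> {1..nV} \<Longrightarrow> 0 < r v"
    using assms(2,3) by blast+
  show "(\<Sum>v\<in>{1..nV}. lam v) > 0" by (rule assms(5))
  fix n v assume "n \<in> states nV" "v \<in> {1..nV}"
  moreover have "\<gamma> n \<in> convZ nV E" using assms(4) calculation(1) unfolding rate_alloc_def by blast
  ultimately show "0 \<le> \<gamma> n v" "\<gamma> n v \<le> 1" using convZ_bounds(1,2)[OF rt] by blast+
qed

lemma load_lt_1_if_pos_recurrent:
  assumes rt: "rooted_tree nV E" and lam: "\<forall>v\<in>{1..nV}. lam v \<ge> 0" and r: "\<forall>v\<in>{1..nV}. r v > 0"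
    and alloc: "rate_alloc nV E \<gamma>" and pos_rec: "pos_recurrent_chain nV lam r \<gamma>"
    and v: "v \<in> {1..nV}"
  shows "(\<Sum>u\<in>anc_bar E v. lam u / r u) < 1"
proof (cases "(\<Sum>v\<in>{1..nV}. lam v) > 0")
  case False
  moreover have "(\<Sum>v\<in>{1..nV}. lam v) \<ge> 0" using lam by (intro sum_nonneg) blast
  ultimately have "(\<Sum>v\<in>{1..nV}. lam v) = 0" by simp
  then have "lam u = 0" if "u \<in> {1..nV}" for u
    using lam that sum_nonneg_eq_0_iff[of "{1..nV}" lam] by simp
  then show ?thesis using anc_bar_subset[OF rt v] by (simp add: subset_iff)
next
  case True
  interpret elastic_chain nV lam r \<gamma>
    using elastic_chain_if_rate_alloc[OF rt lam r alloc True] .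
  have "summable (\<lambda>k. hold_term nV lam r \<gamma> empty_state k empty_state)"
    using pos_rec q_pos[OF empty_state_in_states]
    unfolding pos_recurrent_chain_def pos_recurrent_state_def by auto
  moreover have "(\<Sum>u\<in>anc_bar E v. \<gamma> n u) \<le> 1" if "n \<in> states nV" for n
    using alloc that convZ_bounds(3)[OF rt _ v] unfolding rate_alloc_def by blast
  ultimately show ?thesis
    using hold_term_not_summable_if_overloaded[OF anc_bar_subset[OF rt v]] not_less by blast
qed

lemma srate_priority_topmost:
  "w \<in> {1..nV} \<Longrightarrow> n w \<ge> 1 \<Longrightarrow> \<forall>a\<in>anc E w. n a = 0 \<Longrightarrow> srate r (priority E nV) n w = r w"
  by (simp add: srate_def priority_def)

lemma priority_serves_anc_bar:
  assumes rt: "rooted_tree nV E" and r: "\<forall>v\<in>{1..nV}. r v > 0" and v: "v \<in> {1..nV}"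
    and busy: "workload r (anc_bar E v) n > 0"
  shows "1 \<le> (\<Sum>u\<in>anc_bar E v. srate r (priority E nV) n u / r u)"
proof -
  obtain u where "u \<in> anc_bar E v" "n u \<ge> 1"
  proof (rule ccontr)
    assume "\<not> thesis"
    then have "\<forall>u\<in>anc_bar E v. n u = 0" using that by fastforce
    then show False using busy unfolding workload_def by simp
  qed
  then obtain w where w: "w \<in> anc_bar E v" "n w \<ge> 1" "\<forall>a\<in>anc E w. n a = 0"
    using ex_topmost_in_anc_bar[OF rt] by blast
  have wV: "w \<in> {1..nV}" using w(1) anc_bar_subset[OF rt v] by blast
  have "r w > 0" using r wV by blast
  then have "1 = srate r (priority E nV) n w / r w" using srate_priority_topmost[OF wV w(2,3)] by simp
  also have "\<dots> \<le> (\<Sum>u\<in>anc_bar E v. srate r (priority E nV) n u / r u)"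
    using finite_anc_bar[OF rt v] w(1) anc_bar_subset[OF rt v] r
    by (intro member_le_sum) (auto simp: srate_def priority_def subset_iff less_imp_le)
  finally show ?thesis .
qed

lemma priority_serves_some_beam:
  assumes rt: "rooted_tree nV E" and n: "n \<in> states nV" and nonempty: "n \<noteq> empty_state"
  shows "\<exists>w\<in>{1..nV}. n w \<ge> 1 \<and> srate r (priority E nV) n w = r w"
proof -
  obtain u where nu: "n u \<ge> 1" using nonempty by (auto simp: fun_eq_iff Suc_le_eq)
  have u: "u \<in> {1..nV}" using n nu by (auto simp: states_def)
  have "u \<in> anc_bar E u" by (simp add: anc_bar_def)
  then obtain w where w: "w \<in> anc_bar E u" "n w \<ge> 1" "\<forall>a\<in>anc E w. n a = 0"
    using ex_topmost_in_anc_bar[of nV E u u n, OF rt _ nu] by blast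
  moreover have "w \<in> {1..nV}" using w(1) anc_bar_subset[OF rt u] by blast
  ultimately show ?thesis using srate_priority_topmost[of w nV n E r] by blast
qed

lemma pos_recurrent_priority:
  assumes rt: "rooted_tree nV E" and lam: "\<forall>v\<in>{1..nV}. lam v \<ge> 0" and r: "\<forall>v\<in>{1..nV}. r v > 0"
    and load: "\<forall>v\<in>{1..nV}. (\<Sum>u\<in>anc_bar E v. lam u / r u) < 1"
  shows "pos_recurrent_chain nV lam r (priority E nV)"
proof (cases "(\<Sum>v\<in>{1..nV}. lam v) > 0")
  case False
  then have "qtot nV lam r (priority E nV) empty_state = 0"
    using lam sum_nonneg[of "{1..nV}" lam] by (simp add: qtot_def srate_def not_less)
  then show ?thesis unfolding pos_recurrent_chain_def pos_recurrent_state_def recurrent_state_def by simp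
next
  case True
  interpret elastic_chain nV lam r "priority E nV"
    using elastic_chain_if_rate_alloc[OF rt lam r rate_alloc_priority True] .
  have V: "finite {1..nV}" "{1..nV} \<noteq> {}" using True by (simp, metis less_irrefl sum.empty)
  define \<eta> where "\<eta> = Min ((\<lambda>v. 1 - (\<Sum>u\<in>anc_bar E v. lam u / r u)) ` {1..nV})"
  define \<mu> where "\<mu> = Min (r ` {1..nV})"
  show ?thesis
  proof (rule pos_recurrent_if_underloaded[where A = "anc_bar E" and \<eta> = \<eta> and \<mu> = \<mu>])
    show "\<eta> > 0" unfolding \<eta>_def using V load by (subst Min_gr_iff) auto
    show "\<mu> > 0" unfolding \<mu>_def using V r by (subst Min_gr_iff) auto
    fix v assume v: "v \<in> {1..nV}"
    show "anc_bar E v \<subseteq> {1..nV}" "v \<in> anc_bar E v"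
      using anc_bar_subset[OF rt v] by (auto simp: anc_bar_def)
    have "\<eta> \<le> 1 - (\<Sum>u\<in>anc_bar E v. lam u / r u)" unfolding \<eta>_def using V v by (intro Min_le) auto
    then show "(\<Sum>u\<in>anc_bar E v. lam u / r u) \<le> 1 - \<eta>" by simp
    show "1 \<le> (\<Sum>u\<in>anc_bar E v. sr n u / r u)" if "W (anc_bar E v) n > 0" for n
      using priority_serves_anc_bar[OF rt r v that] .
  next
    fix n assume "n \<in> states nV" "n \<noteq> empty_state"
    then obtain w where "w \<in> {1..nV}" "n w \<ge> 1" "sr n w = r w"
      using priority_serves_some_beam[OF rt] by blast
    moreover have "\<mu> \<le> r w" unfolding \<mu>_def using V calculation(1) by (intro Min_le) auto
    ultimately show "\<exists>u\<in>{1..nV}. n u \<ge> 1 \<and> sr n u \<ge> \<mu>" by auto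
  qed
qed

theorem proposition2:
  fixes nV :: nat and E :: "(nat \<times> nat) set" and lam r :: "nat \<Rightarrow> real"
  assumes "rooted_tree nV E"
    and "\<forall>v\<in>{1..nV}. lam v \<ge> 0"
    and "\<forall>v\<in>{1..nV}. r v > 0"
  shows "(\<exists>\<gamma>. rate_alloc nV E \<gamma> \<and> pos_recurrent_chain nV lam r \<gamma>)
     \<longleftrightarrow> (\<forall>v\<in>{1..nV}. (\<Sum>v'\<in>anc_bar E v. lam v' / r v') < 1)"
  using load_lt_1_if_pos_recurrent[OF assms] pos_recurrent_priority[OF assms] rate_alloc_priority
  by blast

end
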